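(* Let $q(y,z|x)$ be a discrete memoryless broadcast channel with capacity region $\mathcal C$, and let $\lambda_0,\lambda_1,\lambda_2$ be real numbers with $\lambda_0\ge\lambda_1+\lambda_2$. Then the maximum of $\lambda_0R_0+\lambda_1R_1+\lambda_2R_2$ over $(R_0,R_1,R_2)\in\mathcal C$ is attained at some triple with $R_1=0$ or $R_2=0$.
   Context: A two-receiver discrete memoryless broadcast channel has finite alphabets $\mathcal X,\mathcal Y,\mathcal Z$ and transition law $q(y,z|x)$. A rate triple $(R_0,R_1,R_2)$ (common message rate to both receivers, private rate to receiver $Y$, private rate to receiver $Z$) is achievable if for every $\epsilon>0$ and all large $n$ there is a length-$n$ code with those rates and average error probability at most $\epsilon$; $\mathcal C$ is the closure of the set of achievable triples. *)

theory Defs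
  imports "HOL-Probability.Probability"
begin

text \<open>Length-n sequences are functions nat \<Rightarrow> _ of which only the
 values at 0..n-1 matter (output sequences range over PiE {..<n}).\<close>

definition msg_size :: "nat \<Rightarrow> real \<Rightarrow> nat" where
  "msg_size n R = nat \<lceil>2 powr (real n * R)\<rceil>"

definition bc_prob ::
  "('x \<Rightarrow> ('y::finite \<times> 'z::finite) pmf) \<Rightarrow> nat \<Rightarrow> (nat \<Rightarrow> 'x)
     \<Rightarrow> ((nat \<Rightarrow> 'y) \<Rightarrow> (nat \<Rightarrow> 'z) \<Rightarrow> bool) \<Rightarrow> real" where
  "bc_prob q n x E =
     (\<Sum>y\<in>PiE {..<n} (\<lambda>_. UNIV). \<Sum>z\<in>PiE {..<n} (\<lambda>_. UNIV).
        (if E y z then (\<Prod>i<n. pmf (q (x i)) (y i, z i)) else 0))"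

definition bc_avg_error ::
  "('x \<Rightarrow> ('y::finite \<times> 'z::finite) pmf) \<Rightarrow> nat \<Rightarrow> nat \<Rightarrow> nat \<Rightarrow> nat
     \<Rightarrow> (nat \<times> nat \<times> nat \<Rightarrow> (nat \<Rightarrow> 'x))
     \<Rightarrow> ((nat \<Rightarrow> 'y) \<Rightarrow> nat \<times> nat) \<Rightarrow> ((nat \<Rightarrow> 'z) \<Rightarrow> nat \<times> nat) \<Rightarrow> real" where
  "bc_avg_error q n M0 M1 M2 f g1 g2 =
     (\<Sum>m0<M0. \<Sum>m1<M1. \<Sum>m2<M2.
        bc_prob q n (f (m0, m1, m2))
          (\<lambda>y z. g1 y \<noteq> (m0, m1) \<or> g2 z \<noteq> (m0, m2)))
     / real (M0 * M1 * M2)"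

definition bc_achievable ::
  "('x::finite \<Rightarrow> ('y::finite \<times> 'z::finite) pmf) \<Rightarrow> real \<times> real \<times> real \<Rightarrow> bool" where
  "bc_achievable q R =
     (case R of (R0, R1, R2) \<Rightarrow>
       R0 \<ge> 0 \<and> R1 \<ge> 0 \<and> R2 \<ge> 0 \<and>
       (\<forall>\<epsilon>>0. \<exists>N. \<forall>n\<ge>N. \<exists>f g1 g2.
          bc_avg_error q n (msg_size n R0) (msg_size n R1) (msg_size n R2) f g1 g2 \<le> \<epsilon>))"

definition bc_capacity_region ::
  "('x::finite \<Rightarrow> ('y::finite \<times> 'z::finite) pmf) \<Rightarrow> (real \<times> real \<times> real) set" where
  "bc_capacity_region q = closure {R. bc_achievable q R}"

end

theory Submission
  imports Defs
begin

text \<open>The capacity region is compact: by a counting argument a code with average error at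
  most 1/2 has at most about \<open>(|Y||Z|)\<^sup>n\<close> pairs \<open>(m0, m1)\<close> and as many pairs \<open>(m0, m2)\<close>,
  so \<open>R0 + R1\<close> and \<open>R0 + R2\<close> are bounded. It is also closed under moving \<open>t = min R1 R2\<close>
  from both private rates to the common rate: part of a common message can be carried by both
  private messages at once. Hence the linear functional attains its maximum on the region, and
  moving \<open>t\<close> at a maximiser changes the value by \<open>t (\<lambda>0 - \<lambda>1 - \<lambda>2) \<ge> 0\<close> while making one
  private rate vanish.\<close>

lemma bc_prob_mono:
  assumes "\<And>y z. E y z \<Longrightarrow> F y z"
  shows "bc_prob q n x E \<le> bc_prob q n x F"
  unfolding bc_prob_def using assms by (intro sum_mono) (auto simp: prod_nonneg)

lemma bc_prob_le_card:
  fixes q :: "'x \<Rightarrow> ('y::finite \<times> 'z::finite) pmf"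
  shows "bc_prob q n x E \<le>
     real (card {w \<in> PiE {..<n} (\<lambda>_. UNIV) \<times> PiE {..<n} (\<lambda>_. UNIV). E (fst w) (snd w)})"
proof -
  define \<Omega> where "\<Omega> = PiE {..<n} (\<lambda>_. UNIV :: 'y set) \<times> PiE {..<n} (\<lambda>_. UNIV :: 'z set)"
  have "bc_prob q n x E \<le> (\<Sum>y\<in>PiE {..<n} (\<lambda>_. UNIV). \<Sum>z\<in>PiE {..<n} (\<lambda>_. UNIV).
          if E y z then 1 else 0)"
    unfolding bc_prob_def
    by (intro sum_mono) (simp add: prod_le_1 pmf_le_1)
  also have "\<dots> = (\<Sum>w\<in>\<Omega>. if E (fst w) (snd w) then 1 else 0)"
    unfolding \<Omega>_def sum.cartesian_product' by simp
  also have "\<dots> = real (card {w \<in> \<Omega>. E (fst w) (snd w)})"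
    by (simp add: \<Omega>_def finite_PiE sum.inter_filter[symmetric])
  finally show ?thesis unfolding \<Omega>_def .
qed

lemma bc_prob_True: "bc_prob q n x (\<lambda>_ _. True) = 1"
proof -
  have "bc_prob q n x (\<lambda>_ _. True)
      = (\<Sum>y\<in>PiE {..<n} (\<lambda>_. UNIV). \<Prod>i<n. \<Sum>w\<in>UNIV. pmf (q (x i)) (y i, w))"
    unfolding bc_prob_def
    by (intro sum.cong refl)
       (use prod_sum_PiE[of "{..<n}" "\<lambda>_. UNIV" "\<lambda>i w. pmf (q (x i)) (y i, w)" for y] in simp)
  also have "\<dots> = (\<Prod>i<n. \<Sum>u\<in>UNIV. \<Sum>w\<in>UNIV. pmf (q (x i)) (u, w))"
    using prod_sum_PiE[of "{..<n}" "\<lambda>_. UNIV" "\<lambda>i u. \<Sum>w\<in>UNIV. pmf (q (x i)) (u, w)"] by simp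
  also have "\<dots> = 1"
    by (simp add: sum.cartesian_product sum_pmf_eq_1)
  finally show ?thesis .
qed

lemma bc_prob_Not: "bc_prob q n x (\<lambda>y z. \<not> E y z) = 1 - bc_prob q n x E"
proof -
  have "bc_prob q n x E + bc_prob q n x (\<lambda>y z. \<not> E y z) = bc_prob q n x (\<lambda>_ _. True)"
    unfolding bc_prob_def sum.distrib[symmetric] by (intro sum.cong refl) auto
  thus ?thesis by (simp add: bc_prob_True)
qed

lemma msg_size_eq: "real (msg_size n R) = of_int \<lceil>2 powr (real n * R)\<rceil>"
  unfolding msg_size_def by simp

lemma msg_size_ge: "2 powr (real n * R) \<le> real (msg_size n R)"
  unfolding msg_size_eq by linarith

lemma msg_size_less: "real (msg_size n R) < 2 powr (real n * R) + 1"
  unfolding msg_size_eq by linarith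

lemma msg_size_pos: "0 < msg_size n R"
proof -
  have "0 < real (msg_size n R)"
    using msg_size_ge[of n R] powr_gt_zero[of 2 "real n * R"] by linarith
  thus ?thesis by simp
qed

lemma sum_card_fibres_le:
  assumes "finite \<Omega>" "finite A"
  shows "(\<Sum>m\<in>A. card {w \<in> \<Omega>. h w = m}) \<le> card \<Omega>"
proof -
  have "(\<Sum>m\<in>A. card {w \<in> \<Omega>. h w = m}) = card (\<Union>m\<in>A. {w \<in> \<Omega>. h w = m})"
    using assms by (intro card_UN_disjoint[symmetric]) auto
  also have "\<dots> \<le> card \<Omega>"
    using assms by (intro card_mono) auto
  finally show ?thesis .
qed

text \<open>Receiver \<open>Y\<close> decodes \<open>(m0, m1)\<close> only on the output pairs that \<open>g1\<close> maps to it, and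
  these have probability at most 1 each; the decoding sets of distinct pairs are disjoint.\<close>
lemma bc_code_common_private_size_le:
  fixes q :: "'x \<Rightarrow> ('y::finite \<times> 'z::finite) pmf"
  assumes small_error: "bc_avg_error q n M0 M1 M2 f g1 g2 \<le> 1/2" and M2: "0 < M2"
    and M01: "0 < M0 * M1"
  shows "real (M0 * M1) \<le> 2 * real (CARD('y) * CARD('z)) ^ n"
proof -
  define \<Omega> where "\<Omega> = PiE {..<n} (\<lambda>_. UNIV :: 'y set) \<times> PiE {..<n} (\<lambda>_. UNIV :: 'z set)"
  define hit where "hit m0 m1 = real (card {w \<in> \<Omega>. g1 (fst w) = (m0, m1)})" for m0 m1
  define err where "err m0 m1 m2 = bc_prob q n (f (m0, m1, m2))
    (\<lambda>y z. g1 y \<noteq> (m0, m1) \<or> g2 z \<noteq> (m0, m2))" for m0 m1 m2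
  have M: "0 < real (M0 * M1 * M2)" using M2 M01 by simp
  have few_errors: "(\<Sum>m0<M0. \<Sum>m1<M1. \<Sum>m2<M2. err m0 m1 m2) \<le> real (M0 * M1 * M2) / 2"
    using small_error M by (simp add: bc_avg_error_def err_def divide_le_eq mult.commute)
  have decoded: "1 - err m0 m1 m2 \<le> hit m0 m1" for m0 m1 m2
  proof -
    have "1 - err m0 m1 m2 = bc_prob q n (f (m0, m1, m2))
      (\<lambda>y z. \<not> (g1 y \<noteq> (m0, m1) \<or> g2 z \<noteq> (m0, m2)))"
      unfolding err_def by (rule bc_prob_Not[symmetric])
    also have "\<dots> \<le> bc_prob q n (f (m0, m1, m2)) (\<lambda>y z. g1 y = (m0, m1))"
      by (rule bc_prob_mono) auto
    also have "\<dots> \<le> hit m0 m1"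
      unfolding hit_def \<Omega>_def by (rule bc_prob_le_card)
    finally show ?thesis .
  qed
  have "real (M0 * M1 * M2) - (\<Sum>m0<M0. \<Sum>m1<M1. \<Sum>m2<M2. err m0 m1 m2)
      = (\<Sum>m0<M0. \<Sum>m1<M1. \<Sum>m2<M2. 1 - err m0 m1 m2)"
    by (simp add: sum_subtractf)
  also have "\<dots> \<le> (\<Sum>m0<M0. \<Sum>m1<M1. \<Sum>m2<M2. hit m0 m1)"
    by (intro sum_mono decoded)
  also have "\<dots> = real M2 * (\<Sum>m0<M0. \<Sum>m1<M1. hit m0 m1)"
    by (simp add: sum_distrib_left)
  finally have "real (M0 * M1 * M2) - (\<Sum>m0<M0. \<Sum>m1<M1. \<Sum>m2<M2. err m0 m1 m2)
      \<le> real M2 * (\<Sum>m0<M0. \<Sum>m1<M1. hit m0 m1)" .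
  moreover have "real M2 * (\<Sum>m0<M0. \<Sum>m1<M1. hit m0 m1) \<le> real M2 * real (card \<Omega>)"
  proof (rule mult_left_mono)
    have "(\<Sum>m0<M0. \<Sum>m1<M1. hit m0 m1)
        = real (\<Sum>m\<in>{..<M0} \<times> {..<M1}. card {w \<in> \<Omega>. g1 (fst w) = m})"
      by (simp add: hit_def sum.cartesian_product' case_prod_beta)
    also have "\<dots> \<le> real (card \<Omega>)"
      unfolding of_nat_le_iff by (rule sum_card_fibres_le) (simp_all add: \<Omega>_def finite_PiE)
    finally show "(\<Sum>m0<M0. \<Sum>m1<M1. hit m0 m1) \<le> real (card \<Omega>)" .
  qed simp
  moreover have "real (M0 * M1 * M2) = real M2 * real (M0 * M1)" by simp
  ultimately have "real M2 * real (M0 * M1) \<le> real M2 * (2 * real (card \<Omega>))"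
    using few_errors by linarith
  moreover have "card \<Omega> = (CARD('y) * CARD('z)) ^ n"
    by (simp add: \<Omega>_def card_cartesian_product card_PiE power_mult_distrib)
  ultimately show ?thesis using M2 by simp
qed

definition swap_receivers :: "('x \<Rightarrow> ('y \<times> 'z) pmf) \<Rightarrow> 'x \<Rightarrow> ('z \<times> 'y) pmf" where
  "swap_receivers q x = map_pmf prod.swap (q x)"

lemma bc_prob_swap_receivers:
  "bc_prob (swap_receivers q) n x (\<lambda>z y. E y z) = bc_prob q n x E"
proof -
  have "pmf (swap_receivers q a) (z, y) = pmf (q a) (y, z)" for a y z
    using pmf_map_inj'[of prod.swap "q a" "(y, z)"] by (simp add: swap_receivers_def)
  thus ?thesis
    unfolding bc_prob_def by (simp only:) (rule sum.swap)
qed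

lemma bc_avg_error_swap_receivers:
  "bc_avg_error (swap_receivers q) n M0 M2 M1 (\<lambda>(m0, m2, m1). f (m0, m1, m2)) g2 g1
     = bc_avg_error q n M0 M1 M2 f g1 g2"
  unfolding bc_avg_error_def
  by (simp add: bc_prob_swap_receivers[where E = "\<lambda>y z. g1 y \<noteq> _ \<or> g2 z \<noteq> _", simplified]
      disj_commute sum.swap[where A = "{..<M2}"] mult_ac)

lemma bc_achievable_iff:
  "bc_achievable q (R0, R1, R2) \<longleftrightarrow> 0 \<le> R0 \<and> 0 \<le> R1 \<and> 0 \<le> R2 \<and>
     (\<forall>\<epsilon>>0. \<forall>\<^sub>F n in sequentially. \<exists>f g1 g2.
        bc_avg_error q n (msg_size n R0) (msg_size n R1) (msg_size n R2) f g1 g2 \<le> \<epsilon>)"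
  by (simp add: bc_achievable_def eventually_sequentially)

lemma bc_achievable_swap_receivers:
  assumes "bc_achievable q (R0, R1, R2)"
  shows "bc_achievable (swap_receivers q) (R0, R2, R1)"
proof -
  from assms have nonneg: "0 \<le> R0" "0 \<le> R1" "0 \<le> R2"
    and codes: "\<forall>\<epsilon>>0. \<forall>\<^sub>F n in sequentially. \<exists>f g1 g2.
      bc_avg_error q n (msg_size n R0) (msg_size n R1) (msg_size n R2) f g1 g2 \<le> \<epsilon>"
    by (simp_all add: bc_achievable_iff)
  have swapped: "\<exists>f' g1' g2'. bc_avg_error (swap_receivers q) n M0 M2 M1 f' g1' g2' \<le> \<epsilon>"
    if "bc_avg_error q n M0 M1 M2 f g1 g2 \<le> \<epsilon>" for n M0 M1 M2 f g1 g2 \<epsilon>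
    using that by (intro exI[of _ "\<lambda>(m0, m2, m1). f (m0, m1, m2)"] exI[of _ g2] exI[of _ g1])
      (simp add: bc_avg_error_swap_receivers)
  have "\<forall>\<^sub>F n in sequentially. \<exists>f' g1' g2'. bc_avg_error (swap_receivers q) n
      (msg_size n R0) (msg_size n R2) (msg_size n R1) f' g1' g2' \<le> \<epsilon>" if "0 < \<epsilon>" for \<epsilon>
    using codes[rule_format, OF that] by (rule eventually_mono) (elim exE swapped)
  thus ?thesis
    using nonneg by (simp add: bc_achievable_iff)
qed

lemma bc_achievable_common_private1_le:
  fixes q :: "'x::finite \<Rightarrow> ('y::finite \<times> 'z::finite) pmf"
  assumes "bc_achievable q (R0, R1, R2)"
  shows "R0 + R1 \<le> 1 + log 2 (CARD('y) * CARD('z))"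
proof -
  define W where "W = real (CARD('y) * CARD('z))"
  have "0 < CARD('y) * CARD('z)" by simp
  hence W: "1 \<le> W" unfolding W_def by linarith
  from assms have "\<forall>\<epsilon>>0. \<exists>N. \<forall>n\<ge>N. \<exists>f g1 g2.
      bc_avg_error q n (msg_size n R0) (msg_size n R1) (msg_size n R2) f g1 g2 \<le> \<epsilon>"
    by (simp add: bc_achievable_def)
  then obtain N where "\<forall>n\<ge>N. \<exists>f g1 g2.
      bc_avg_error q n (msg_size n R0) (msg_size n R1) (msg_size n R2) f g1 g2 \<le> 1 / 2"
    by (auto dest: spec[of _ "1 / 2"])
  then obtain f g1 g2 where code: "bc_avg_error q (Suc N) (msg_size (Suc N) R0)
      (msg_size (Suc N) R1) (msg_size (Suc N) R2) f g1 g2 \<le> 1 / 2"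
    using le_SucI by blast
  define n where "n = Suc N"
  have n: "1 \<le> n" by (simp add: n_def)
  have "2 powr (real n * (R0 + R1)) = 2 powr (real n * R0) * 2 powr (real n * R1)"
    by (simp add: powr_add[symmetric] algebra_simps)
  also have "\<dots> \<le> real (msg_size n R0 * msg_size n R1)"
    by (simp add: mult_mono msg_size_ge)
  also have "\<dots> \<le> 2 * W ^ n"
    unfolding W_def n_def by (rule bc_code_common_private_size_le[OF code]) (simp_all add: msg_size_pos)
  finally have "real n * (R0 + R1) \<le> 1 + real n * log 2 W"
    using W by (simp add: le_log_iff[symmetric] log_mult_pos log_nat_power)
  also have "\<dots> \<le> real n * (1 + log 2 W)"
    using n by (simp add: algebra_simps)
  finally show ?thesis using n by (simp add: W_def)
qed

lemma bc_achievable_common_private2_le: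
  fixes q :: "'x::finite \<Rightarrow> ('y::finite \<times> 'z::finite) pmf"
  assumes "bc_achievable q (R0, R1, R2)"
  shows "R0 + R2 \<le> 1 + log 2 (CARD('y) * CARD('z))"
  using bc_achievable_common_private1_le[OF bc_achievable_swap_receivers[OF assms]]
  by (simp add: mult.commute)

lemma mod_add_unshift:
  assumes "x < M" "s < M"
  shows "((x + s) mod M + M - s) mod M = (x :: nat)"
proof (cases "x + s < M")
  case False
  hence "(x + s) mod M + M - s = x"
    using assms by (simp add: le_mod_geq)
  thus ?thesis using assms by simp
qed (use assms in simp)

lemma sum_shift_mod:
  fixes c M :: nat
  assumes "c < M"
  shows "(\<Sum>s<M. h ((c + s) mod M)) = (\<Sum>r<M. h r)"
proof -
  have "inj_on (\<lambda>s. (c + s) mod M) {..<M}"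
    by (rule inj_on_inverseI[where g = "\<lambda>r. (r + M - c) mod M"])
       (use assms mod_add_unshift in \<open>simp add: add.commute\<close>)
  hence "bij_betw (\<lambda>s. (c + s) mod M) {..<M} {..<M}"
    using assms by (intro bij_betw_imageI endo_inj_surj) auto
  thus ?thesis using sum.reindex_bij_betw by blast
qed

lemma exists_card_mult_le_sum:
  fixes f :: "'a \<Rightarrow> real"
  assumes "finite S" "S \<noteq> {}"
  shows "\<exists>s\<in>S. real (card S) * f s \<le> sum f S"
proof -
  obtain s where "s \<in> S" "\<forall>t\<in>S. f s \<le> f t"
    using assms arg_min_if_finite[of S f] by (metis not_le)
  thus ?thesis using sum_bounded_below[of S "f s" f] by auto
qed

text \<open>As the shift runs over all residues, every message visits every position exactly once,
  so some shift is at least as good as the average.\<close>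
lemma exists_shift_sum_le:
  fixes err :: "nat \<Rightarrow> nat \<Rightarrow> nat \<Rightarrow> real"
  assumes u: "\<And>a. a \<in> A \<Longrightarrow> u0 a < M0 \<and> u1 a < M1 \<and> u2 a < M2"
    and M: "0 < M0" "0 < M1" "0 < M2"
  shows "\<exists>s0<M0. \<exists>s1<M1. \<exists>s2<M2.
    real (M0 * M1 * M2) *
      (\<Sum>a\<in>A. err ((u0 a + s0) mod M0) ((u1 a + s1) mod M1) ((u2 a + s2) mod M2))
    \<le> real (card A) * (\<Sum>m0<M0. \<Sum>m1<M1. \<Sum>m2<M2. err m0 m1 m2)"
proof -
  define S where "S = {..<M0} \<times> {..<M1} \<times> {..<M2}"
  define P where "P = (\<lambda>(s0, s1, s2) a.
    err ((u0 a + s0) mod M0) ((u1 a + s1) mod M1) ((u2 a + s2) mod M2))"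
  have "(\<Sum>s\<in>S. P s a) = (\<Sum>m0<M0. \<Sum>m1<M1. \<Sum>m2<M2. err m0 m1 m2)" if "a \<in> A" for a
  proof -
    have u_a: "u0 a < M0" "u1 a < M1" "u2 a < M2" using u[OF that] by auto
    have shift2: "(\<Sum>s2<M2. err x y ((u2 a + s2) mod M2)) = (\<Sum>m2<M2. err x y m2)" for x y
      using sum_shift_mod[OF u_a(3), of "err x y"] .
    have shift1: "(\<Sum>s1<M1. \<Sum>m2<M2. err x ((u1 a + s1) mod M1) m2)
        = (\<Sum>m1<M1. \<Sum>m2<M2. err x m1 m2)" for x
      using sum_shift_mod[OF u_a(2), of "\<lambda>m1. \<Sum>m2<M2. err x m1 m2"] .
    have shift0: "(\<Sum>s0<M0. \<Sum>m1<M1. \<Sum>m2<M2. err ((u0 a + s0) mod M0) m1 m2)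
        = (\<Sum>m0<M0. \<Sum>m1<M1. \<Sum>m2<M2. err m0 m1 m2)"
      using sum_shift_mod[OF u_a(1), of "\<lambda>m0. \<Sum>m1<M1. \<Sum>m2<M2. err m0 m1 m2"] .
    show ?thesis
      unfolding S_def sum.cartesian_product' P_def by (simp add: shift2 shift1 shift0)
  qed
  hence "(\<Sum>s\<in>S. \<Sum>a\<in>A. P s a) = (\<Sum>a\<in>A. \<Sum>m0<M0. \<Sum>m1<M1. \<Sum>m2<M2. err m0 m1 m2)"
    by (subst sum.swap) (rule sum.cong, simp_all)
  moreover obtain s where "s \<in> S" "real (card S) * (\<Sum>a\<in>A. P s a) \<le> (\<Sum>s\<in>S. \<Sum>a\<in>A. P s a)"
    using exists_card_mult_le_sum[of S "\<lambda>s. \<Sum>a\<in>A. P s a"] M by (force simp: S_def)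
  moreover obtain s0 s1 s2 where "s = (s0, s1, s2)" by (cases s)
  moreover have "card S = M0 * M1 * M2"
    by (simp add: S_def card_cartesian_product)
  ultimately show ?thesis
    by (intro exI[of _ s0] exI[of _ s1] exI[of _ s2] conjI) (simp_all add: S_def P_def)
qed

lemma mult_add_less_of_less:
  fixes b r K :: nat
  assumes "b < N" "N * K \<le> M" "r < K"
  shows "b * K + r < M"
proof -
  have "b * K + r < Suc b * K" using assms(3) by simp
  also have "\<dots> \<le> N * K" using assms(1) by (intro mult_right_mono) auto
  finally show ?thesis using assms(2) by linarith
qed

text \<open>A new common message \<open>a\<close> is sent as the old common message \<open>a div K\<close>, with its
  remainder \<open>a mod K\<close> placed in both old private messages, so either receiver recovers \<open>a\<close>.
  This sub-code uses only part of the old messages; a cyclic shift of the old message indices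
  chosen by averaging keeps its average error below that of the old code.\<close>
lemma bc_code_merge_private_into_common:
  fixes q :: "'x \<Rightarrow> ('y::finite \<times> 'z::finite) pmf"
  assumes K: "0 < K" and N: "0 < N0" "0 < N1" "0 < N2"
    and le: "N0 \<le> M0 * K" "N1 * K \<le> M1" "N2 * K \<le> M2"
  shows "\<exists>f' g1' g2'. bc_avg_error q n N0 N1 N2 f' g1' g2' \<le> bc_avg_error q n M0 M1 M2 f g1 g2"
proof -
  have "0 < M0 * K" using N(1) le(1) by linarith
  moreover have "0 < M1" using le(2) mult_pos_pos[OF N(2) K] by linarith
  moreover have "0 < M2" using le(3) mult_pos_pos[OF N(3) K] by linarith
  ultimately have M: "0 < M0" "0 < M1" "0 < M2" by simp_all
  define A where "A = {..<N0} \<times> {..<N1} \<times> {..<N2}"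
  define u0 where "u0 = (\<lambda>(a :: nat, b :: nat, c :: nat). a div K)"
  define u1 where "u1 = (\<lambda>(a, b :: nat, c :: nat). b * K + a mod K)"
  define u2 where "u2 = (\<lambda>(a, b :: nat, c :: nat). c * K + a mod K)"
  define err where "err m0 m1 m2 = bc_prob q n (f (m0, m1, m2))
    (\<lambda>y z. g1 y \<noteq> (m0, m1) \<or> g2 z \<noteq> (m0, m2))" for m0 m1 m2
  have "u0 m < M0 \<and> u1 m < M1 \<and> u2 m < M2" if "m \<in> A" for m
    using that K le(1) mult_add_less_of_less[OF _ le(2)] mult_add_less_of_less[OF _ le(3)]
    by (auto simp: A_def u0_def u1_def u2_def less_mult_imp_div_less)
  then obtain s0 s1 s2 where s: "s0 < M0" "s1 < M1" "s2 < M2" and best: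
    "real (M0 * M1 * M2) *
      (\<Sum>m\<in>A. err ((u0 m + s0) mod M0) ((u1 m + s1) mod M1) ((u2 m + s2) mod M2))
    \<le> real (card A) * (\<Sum>m0<M0. \<Sum>m1<M1. \<Sum>m2<M2. err m0 m1 m2)"
    using exists_shift_sum_le[of A u0 M0 u1 M1 u2 M2 err] M by (auto simp: A_def)
  define unshift where "unshift M s v = (v + M - s) mod M" for M s v :: nat
  define split where "split u v = (u * K + v mod K, v div K)" for u v
  define f' where "f' m = f ((u0 m + s0) mod M0, (u1 m + s1) mod M1, (u2 m + s2) mod M2)" for m
  define g1' where "g1' y = (case g1 y of (u, v) \<Rightarrow> split (unshift M0 s0 u) (unshift M1 s1 v))" for y
  define g2' where "g2' z = (case g2 z of (u, v) \<Rightarrow> split (unshift M0 s0 u) (unshift M2 s2 v))" for z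
  define err' where "err' = (\<lambda>(a, b, c). bc_prob q n (f' (a, b, c))
    (\<lambda>y z. g1' y \<noteq> (a, b) \<or> g2' z \<noteq> (a, c)))"
  have decode: "split (unshift M0 s0 ((a div K + s0) mod M0))
      (unshift Mi si ((b * K + a mod K + si) mod Mi)) = (a, b)"
    if "a < N0" "b < Ni" "Ni * K \<le> Mi" "si < Mi" for a b Ni Mi si
    using that K s(1) le(1) mult_add_less_of_less[of b Ni K Mi "a mod K"]
    by (simp add: split_def unshift_def mod_add_unshift less_mult_imp_div_less)
  have "sum err' A \<le> (\<Sum>m\<in>A. err ((u0 m + s0) mod M0) ((u1 m + s1) mod M1) ((u2 m + s2) mod M2))"
  proof (rule sum_mono)
    fix m assume "m \<in> A"
    thus "err' m \<le> err ((u0 m + s0) mod M0) ((u1 m + s1) mod M1) ((u2 m + s2) mod M2)"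
      using decode[of _ _ N1 M1 s1] decode[of _ _ N2 M2 s2] le s
      by (auto simp: A_def err'_def err_def f'_def g1'_def g2'_def u0_def u1_def u2_def
          intro!: bc_prob_mono)
  qed
  hence "real (M0 * M1 * M2) * sum err' A \<le> real (M0 * M1 * M2) *
      (\<Sum>m\<in>A. err ((u0 m + s0) mod M0) ((u1 m + s1) mod M1) ((u2 m + s2) mod M2))"
    by (rule mult_left_mono) simp
  also have "\<dots> \<le> real (card A) * (\<Sum>m0<M0. \<Sum>m1<M1. \<Sum>m2<M2. err m0 m1 m2)"
    by (rule best)
  finally have "real (M0 * M1 * M2) * sum err' A
      \<le> real (card A) * (\<Sum>m0<M0. \<Sum>m1<M1. \<Sum>m2<M2. err m0 m1 m2)" .
  moreover have "0 < card A" using N by (simp add: A_def card_cartesian_product)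
  ultimately have "sum err' A / real (card A)
      \<le> (\<Sum>m0<M0. \<Sum>m1<M1. \<Sum>m2<M2. err m0 m1 m2) / real (M0 * M1 * M2)"
    using M by (simp add: field_simps)
  moreover have "bc_avg_error q n N0 N1 N2 f' g1' g2' = sum err' A / real (card A)"
    by (simp add: bc_avg_error_def err'_def A_def sum.cartesian_product' card_cartesian_product)
  moreover have "bc_avg_error q n M0 M1 M2 f g1 g2
      = (\<Sum>m0<M0. \<Sum>m1<M1. \<Sum>m2<M2. err m0 m1 m2) / real (M0 * M1 * M2)"
    by (simp add: bc_avg_error_def err_def)
  ultimately have "bc_avg_error q n N0 N1 N2 f' g1' g2' \<le> bc_avg_error q n M0 M1 M2 f g1 g2"
    by linarith
  thus ?thesis by blast
qed

lemma msg_size_diff_mult_le: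
  assumes t: "t \<le> R" and n: "2 \<le> real n * \<delta>"
    and K: "real K \<le> 2 powr (real n * (t - \<delta> / 2))"
  shows "msg_size n (R - t) * K \<le> msg_size n R"
proof -
  have "real (msg_size n (R - t)) * real K
      \<le> (2 powr (real n * (R - t)) + 1) * 2 powr (real n * (t - \<delta> / 2))"
    using msg_size_less[of n "R - t"] K by (intro mult_mono) auto
  also have "\<dots> = 2 powr (real n * (R - \<delta> / 2)) + 2 powr (real n * (t - \<delta> / 2))"
    by (simp add: distrib_right powr_add[symmetric] algebra_simps)
  also have "\<dots> \<le> 2 * 2 powr (real n * (R - \<delta> / 2))"
    using t by (simp add: mult_left_mono)
  also have "\<dots> = 2 powr (1 + real n * (R - \<delta> / 2))"
    by (simp add: powr_add)
  also have "\<dots> \<le> 2 powr (real n * R)"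
    using n by (simp add: algebra_simps)
  also have "\<dots> \<le> real (msg_size n R)"
    by (rule msg_size_ge)
  finally have "real (msg_size n (R - t) * K) \<le> real (msg_size n R)" by simp
  thus ?thesis by (simp only: of_nat_le_iff)
qed

lemma msg_size_add_le_mult:
  assumes R0: "0 \<le> R0" and t: "\<delta> \<le> t" and n: "4 \<le> real n * \<delta>"
    and K: "2 powr (real n * (t - \<delta> / 2)) - 1 < real K"
  shows "msg_size n (R0 + t - \<delta>) \<le> msg_size n R0 * K"
proof -
  define P where "P = 2 powr (real n * R0)"
  define Q where "Q = 2 powr (real n * (t - \<delta>))"
  define x where "x = 2 powr (real n * \<delta> / 2)"
  have P: "1 \<le> P" unfolding P_def by (rule ge_one_powr_ge_zero) (use R0 in auto)
  have Q: "1 \<le> Q" unfolding Q_def by (rule ge_one_powr_ge_zero) (use t in auto)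
  have x: "4 \<le> x"
  proof -
    have "(4 :: real) = 2 powr 2" by simp
    also have "\<dots> \<le> x" unfolding x_def using n by (intro powr_mono) auto
    finally show ?thesis .
  qed
  have "real (msg_size n (R0 + t - \<delta>)) < P * Q + 1"
    using msg_size_less[of n "R0 + t - \<delta>"]
    by (simp add: P_def Q_def powr_add[symmetric] algebra_simps)
  also have "\<dots> \<le> P * (Q * x - 1)"
  proof -
    have "P * Q * 4 \<le> P * Q * x" using P Q x by (intro mult_left_mono) auto
    moreover have "P \<le> P * Q" using P Q by simp
    moreover have "P * (Q * x - 1) = P * Q * x - P" by (simp add: algebra_simps)
    ultimately show ?thesis using P by linarith
  qed
  also have "\<dots> \<le> real (msg_size n R0) * real K"
  proof (rule mult_mono)
    show "P \<le> real (msg_size n R0)" unfolding P_def by (rule msg_size_ge)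
    show "Q * x - 1 \<le> real K"
      using K by (simp add: Q_def x_def powr_add[symmetric] algebra_simps)
  qed (use P Q x mult_mono[of 1 Q 1 x] in auto)
  finally have "real (msg_size n (R0 + t - \<delta>)) < real (msg_size n R0 * K)" by simp
  hence "msg_size n (R0 + t - \<delta>) < msg_size n R0 * K" by (simp only: of_nat_less_iff)
  thus ?thesis by simp
qed

text \<open>The common message is enlarged by \<open>K \<approx> 2 powr (n (t - \<delta>/2))\<close> values; the slack
  \<open>\<delta>\<close> absorbs the rounding of the message set sizes once \<open>n \<delta> \<ge> 4\<close>.\<close>
lemma bc_achievable_move_to_common:
  fixes q :: "'x::finite \<Rightarrow> ('y::finite \<times> 'z::finite) pmf"
  assumes ach: "bc_achievable q (R0, R1, R2)" and \<delta>: "0 < \<delta>" "\<delta> \<le> t"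
    and t: "t \<le> R1" "t \<le> R2"
  shows "bc_achievable q (R0 + t - \<delta>, R1 - t, R2 - t)"
proof -
  from ach have nonneg: "0 \<le> R0" "0 \<le> R1" "0 \<le> R2"
    and codes: "\<forall>\<epsilon>>0. \<forall>\<^sub>F n in sequentially. \<exists>f g1 g2.
      bc_avg_error q n (msg_size n R0) (msg_size n R1) (msg_size n R2) f g1 g2 \<le> \<epsilon>"
    unfolding bc_achievable_iff by auto
  have long: "\<forall>\<^sub>F n in sequentially. 4 \<le> real n * \<delta>"
  proof -
    obtain N :: nat where "4 / \<delta> \<le> real N" using real_arch_simple by blast
    hence "4 \<le> real N * \<delta>" using \<delta> by (simp add: pos_divide_le_eq)
    moreover have "real N * \<delta> \<le> real n * \<delta>" if "N \<le> n" for n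
      using that \<delta> by (simp add: mult_right_mono)
    ultimately have "4 \<le> real n * \<delta>" if "N \<le> n" for n
      using that by (meson order_trans)
    thus ?thesis unfolding eventually_sequentially by blast
  qed
  have new_code: "\<exists>f' g1' g2'. bc_avg_error q n (msg_size n (R0 + t - \<delta>))
      (msg_size n (R1 - t)) (msg_size n (R2 - t)) f' g1' g2' \<le> \<epsilon>"
    if n: "4 \<le> real n * \<delta>"
      and code: "bc_avg_error q n (msg_size n R0) (msg_size n R1) (msg_size n R2) f g1 g2 \<le> \<epsilon>"
    for n \<epsilon> f g1 g2
  proof -
    define y where "y = 2 powr (real n * (t - \<delta> / 2))"
    define K where "K = nat \<lfloor>y\<rfloor>"
    have "1 \<le> y" unfolding y_def by (rule ge_one_powr_ge_zero) (use \<delta> in auto)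
    hence K: "0 < K" "real K \<le> y" "y - 1 < real K"
      unfolding K_def by linarith+
    have "2 \<le> real n * \<delta>" using n by linarith
    thus ?thesis
      using bc_code_merge_private_into_common[OF K(1) msg_size_pos msg_size_pos msg_size_pos
          msg_size_add_le_mult[OF nonneg(1) \<delta>(2) n K(3)[unfolded y_def]]
          msg_size_diff_mult_le[OF t(1) _ K(2)[unfolded y_def]]
          msg_size_diff_mult_le[OF t(2) _ K(2)[unfolded y_def]], of q n f g1 g2]
        code by (blast intro: order_trans)
  qed
  have "\<forall>\<^sub>F n in sequentially. \<exists>f' g1' g2'. bc_avg_error q n (msg_size n (R0 + t - \<delta>))
      (msg_size n (R1 - t)) (msg_size n (R2 - t)) f' g1' g2' \<le> \<epsilon>" if "0 < \<epsilon>" for \<epsilon>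
    using eventually_conj[OF long codes[rule_format, OF that]]
    by (rule eventually_mono) (use new_code in blast)
  thus ?thesis
    using nonneg \<delta> t by (simp add: bc_achievable_iff)
qed

definition move_to_common :: "real \<times> real \<times> real \<Rightarrow> real \<times> real \<times> real" where
  "move_to_common R = (let t = min (fst (snd R)) (snd (snd R))
     in (fst R + t, fst (snd R) - t, snd (snd R) - t))"

lemma move_to_common_Pair:
  "move_to_common (R0, R1, R2) = (R0 + min R1 R2, R1 - min R1 R2, R2 - min R1 R2)"
  by (simp add: move_to_common_def Let_def)

lemma continuous_on_move_to_common: "continuous_on S move_to_common"
  unfolding move_to_common_def Let_def by (intro continuous_intros)

lemma bc_achievable_move_to_common_closure:
  fixes q :: "'x::finite \<Rightarrow> ('y::finite \<times> 'z::finite) pmf"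
  assumes "bc_achievable q R"
  shows "move_to_common R \<in> closure {R. bc_achievable q R}"
proof -
  obtain R0 R1 R2 where R: "R = (R0, R1, R2)" by (cases R)
  define t where "t = min R1 R2"
  have "0 \<le> t" using assms by (simp add: R t_def bc_achievable_iff)
  have "\<exists>R'\<in>{R. bc_achievable q R}. dist R' (R0 + t, R1 - t, R2 - t) < e" if "0 < e" for e
  proof (cases "t = 0")
    case True
    thus ?thesis using assms that by (intro bexI[of _ R]) (auto simp: R)
  next
    case False
    define \<delta> where "\<delta> = min t (e / 2)"
    have \<delta>: "0 < \<delta>" "\<delta> \<le> t" using \<open>0 \<le> t\<close> False that by (auto simp: \<delta>_def)
    have "bc_achievable q (R0 + t - \<delta>, R1 - t, R2 - t)"
      using bc_achievable_move_to_common[of q R0 R1 R2 \<delta> t] assms \<delta> by (simp add: R t_def)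
    moreover have "dist (R0 + t - \<delta>, R1 - t, R2 - t) (R0 + t, R1 - t, R2 - t) < e"
      using \<delta> that by (simp add: dist_Pair_Pair dist_real_def \<delta>_def)
    ultimately show ?thesis by blast
  qed
  thus ?thesis
    by (simp add: R t_def move_to_common_Pair closure_approachable)
qed

lemma bc_capacity_region_move_to_common:
  fixes q :: "'x::finite \<Rightarrow> ('y::finite \<times> 'z::finite) pmf"
  assumes "R \<in> bc_capacity_region q"
  shows "move_to_common R \<in> bc_capacity_region q"
proof -
  let ?A = "{R. bc_achievable q R}"
  have "move_to_common ` closure ?A \<subseteq> closure (move_to_common ` ?A)"
    by (rule continuous_image_closure_subset[OF continuous_on_move_to_common[of UNIV]]) simp
  also have "\<dots> \<subseteq> closure ?A"
    using bc_achievable_move_to_common_closure[of q] by (intro closure_minimal) auto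
  finally show ?thesis
    using assms unfolding bc_capacity_region_def by blast
qed

lemma bc_capacity_region_subset_box:
  fixes q :: "'x::finite \<Rightarrow> ('y::finite \<times> 'z::finite) pmf"
  defines "B \<equiv> 1 + log 2 (CARD('y) * CARD('z))"
  shows "bc_capacity_region q \<subseteq> {0..B} \<times> {0..B} \<times> {0..B}"
  unfolding bc_capacity_region_def
proof (rule closure_minimal)
  show "{R. bc_achievable q R} \<subseteq> {0..B} \<times> {0..B} \<times> {0..B}"
  proof
    fix R assume "R \<in> {R. bc_achievable q R}"
    moreover obtain R0 R1 R2 where "R = (R0, R1, R2)" by (cases R)
    ultimately show "R \<in> {0..B} \<times> {0..B} \<times> {0..B}"
      using bc_achievable_common_private1_le[of q R0 R1 R2]
        bc_achievable_common_private2_le[of q R0 R1 R2]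
      by (auto simp: B_def bc_achievable_iff)
  qed
qed (intro closed_Times closed_atLeastAtMost)

lemma compact_bc_capacity_region:
  fixes q :: "'x::finite \<Rightarrow> ('y::finite \<times> 'z::finite) pmf"
  shows "compact (bc_capacity_region q)"
proof -
  let ?B = "1 + log 2 (CARD('y) * CARD('z))"
  have "bounded ({0..?B} \<times> {0..?B} \<times> {0..?B})"
    by (intro compact_imp_bounded compact_Times compact_Icc)
  hence "bounded (bc_capacity_region q)"
    using bc_capacity_region_subset_box by (rule bounded_subset)
  thus ?thesis
    by (simp add: compact_eq_bounded_closed bc_capacity_region_def)
qed

lemma bc_achievable_zero: "bc_achievable q (0, 0, 0)"
proof -
  have "bc_avg_error q n (msg_size n 0) (msg_size n 0) (msg_size n 0) f
      (\<lambda>_. (0, 0)) (\<lambda>_. (0, 0)) = 0" for n f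
    by (simp add: bc_avg_error_def bc_prob_def msg_size_def)
  hence "\<exists>f g1 g2. bc_avg_error q n (msg_size n 0) (msg_size n 0) (msg_size n 0) f g1 g2 \<le> \<epsilon>"
    if "0 < \<epsilon>" for n \<epsilon>
    using that by (metis less_imp_le)
  thus ?thesis
    by (simp add: bc_achievable_iff)
qed

theorem corollary1:
  fixes q :: "'x::finite \<Rightarrow> ('y::finite \<times> 'z::finite) pmf"
    and l0 l1 l2 :: real
  assumes "l0 \<ge> l1 + l2"
  shows "\<exists>R0 R1 R2. (R0, R1, R2) \<in> bc_capacity_region q \<and> (R1 = 0 \<or> R2 = 0) \<and>
           (\<forall>S0 S1 S2. (S0, S1, S2) \<in> bc_capacity_region q \<longrightarrow>
              l0 * S0 + l1 * S1 + l2 * S2 \<le> l0 * R0 + l1 * R1 + l2 * R2)"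
proof -
  define obj where "obj R = l0 * fst R + l1 * fst (snd R) + l2 * snd (snd R)" for R
  have "continuous_on (bc_capacity_region q) obj"
    unfolding obj_def by (intro continuous_intros)
  moreover have "(0, 0, 0) \<in> bc_capacity_region q"
    using bc_achievable_zero closure_subset by (fastforce simp: bc_capacity_region_def)
  ultimately obtain R where R: "R \<in> bc_capacity_region q"
    and max: "\<forall>S \<in> bc_capacity_region q. obj S \<le> obj R"
    using continuous_attains_sup[OF compact_bc_capacity_region] by blast
  obtain R0 R1 R2 where R_eq: "R = (R0, R1, R2)" by (cases R)
  define t where "t = min R1 R2"
  have "0 \<le> t" using R R_eq bc_capacity_region_subset_box[of q] by (auto simp: t_def)
  hence "0 \<le> t * (l0 - (l1 + l2))"
    using assms by simp
  hence better: "obj R \<le> obj (R0 + t, R1 - t, R2 - t)"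
    by (simp add: R_eq obj_def algebra_simps)
  show ?thesis
  proof (intro exI conjI allI impI)
    show "(R0 + t, R1 - t, R2 - t) \<in> bc_capacity_region q"
      using bc_capacity_region_move_to_common[OF R] by (simp add: R_eq move_to_common_Pair t_def)
    show "R1 - t = 0 \<or> R2 - t = 0"
      by (simp add: t_def min_def)
    fix S0 S1 S2 assume "(S0, S1, S2) \<in> bc_capacity_region q"
    hence "obj (S0, S1, S2) \<le> obj (R0 + t, R1 - t, R2 - t)"
      using max better by fastforce
    thus "l0 * S0 + l1 * S1 + l2 * S2 \<le> l0 * (R0 + t) + l1 * (R1 - t) + l2 * (R2 - t)"
      by (simp add: obj_def)
  qed
qed

end
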